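(* Let $\Gamma$ be any context of $\lambda\mathsf{HOL}$ (possibly extended by constants and additional conversion rules) in which there are a type $A:\square$ and terms $\mathsf{intro}:T\,A\to A$ and $\mathsf{match}:A\to T\,A$ such that $\mathsf{match}\circ\mathsf{intro}$ is judgementally equal to $T\,(\mathsf{intro}\circ\mathsf{match})$; explicitly, for all $u:T\,A$ and $p:\mathsf{Pow}\,A$, $\mathsf{match}\,(\mathsf{intro}\,u)\,p$ is judgementally equal to $u\,(\lambda_{x:A}\,p\,(\mathsf{intro}\,(\mathsf{match}\,x)))$. Then there is a term of type $\perp$ in $\Gamma$.
   Context: $\lambda\mathsf{HOL}$ (minimal higher-order logic) is the pure type system with sorts $*,\square,\Delta$, axioms $*:\square$ and $\square:\Delta$, and rules $( *,* )$, $(\square,\square)$, $(\square,* )$; judgemental equality is $\beta$-conversion. Define $\mathsf{Pow}\,X = X\to *$ and $T\,X=\mathsf{Pow}(\mathsf{Pow}\,X)$. For $f:X\to Y$, define $T\,f:T\,X\to T\,Y$ by $T\,f\,F\,q = F\,(\lambda_{x:X}\,q\,(f\,x))$, and $g\circ f=\lambda_{x:X}\,g\,(f\,x)$. Define $\perp:*$ by $\perp=\forall_{p:*}\,p$. *)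

theory Defs
  imports Main
begin

section \<open>Deep embedding of the pure type system lambda-HOL (de Bruijn indices)\<close>

datatype sort = Star | Box | Tri

datatype trm =
    Var nat
  | Srt sort
  | Pi trm trm      (* Pi x:A. B,  B under one binder *)
  | Lam trm trm     (* lambda x:A. b, b under one binder *)
  | App trm trm

fun lift :: "nat \<Rightarrow> nat \<Rightarrow> trm \<Rightarrow> trm" where
  "lift n c (Var i) = (if i < c then Var i else Var (i + n))"
| "lift n c (Srt s) = Srt s"
| "lift n c (Pi A B) = Pi (lift n c A) (lift n (Suc c) B)"
| "lift n c (Lam A b) = Lam (lift n c A) (lift n (Suc c) b)"
| "lift n c (App f a) = App (lift n c f) (lift n c a)"

fun subst :: "trm \<Rightarrow> nat \<Rightarrow> trm \<Rightarrow> trm" where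
  "subst (Var i) k s = (if i < k then Var i else if i = k then lift k 0 s else Var (i - 1))"
| "subst (Srt x) k s = Srt x"
| "subst (Pi A B) k s = Pi (subst A k s) (subst B (Suc k) s)"
| "subst (Lam A b) k s = Lam (subst A k s) (subst b (Suc k) s)"
| "subst (App f a) k s = App (subst f k s) (subst a k s)"

text \<open>One-step reduction: beta plus the additional conversion rules R, closed under
  all term constructors.\<close>
inductive step :: "(trm \<Rightarrow> trm \<Rightarrow> bool) \<Rightarrow> trm \<Rightarrow> trm \<Rightarrow> bool" for R where
  beta: "step R (App (Lam A b) a) (subst b 0 a)"
| extra: "R a b \<Longrightarrow> step R a b"
| piL: "step R A A' \<Longrightarrow> step R (Pi A B) (Pi A' B)"
| piR: "step R B B' \<Longrightarrow> step R (Pi A B) (Pi A B')"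
| lamL: "step R A A' \<Longrightarrow> step R (Lam A b) (Lam A' b)"
| lamR: "step R b b' \<Longrightarrow> step R (Lam A b) (Lam A b')"
| appL: "step R f f' \<Longrightarrow> step R (App f a) (App f' a)"
| appR: "step R a a' \<Longrightarrow> step R (App f a) (App f a')"

text \<open>Judgemental equality: the equivalence closure (conversion).\<close>
definition conv :: "(trm \<Rightarrow> trm \<Rightarrow> bool) \<Rightarrow> trm \<Rightarrow> trm \<Rightarrow> bool" where
  "conv R = equivclp (step R)"

inductive axiom :: "sort \<Rightarrow> sort \<Rightarrow> bool" where
  "axiom Star Box"
| "axiom Box Tri"

inductive prule :: "sort \<Rightarrow> sort \<Rightarrow> bool" where
  "prule Star Star"
| "prule Box Box"
| "prule Box Star"

text \<open>Typing judgement of the PTS; contexts are lists, newest declaration first;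
  the type of Var i in context G is lift (Suc i) 0 (G ! i).\<close>
inductive hastype :: "(trm \<Rightarrow> trm \<Rightarrow> bool) \<Rightarrow> trm list \<Rightarrow> trm \<Rightarrow> trm \<Rightarrow> bool" for R where
  ax: "axiom s1 s2 \<Longrightarrow> hastype R [] (Srt s1) (Srt s2)"
| start: "hastype R G A (Srt s) \<Longrightarrow> hastype R (A # G) (Var 0) (lift 1 0 A)"
| weak: "hastype R G t B \<Longrightarrow> hastype R G A (Srt s) \<Longrightarrow> hastype R (A # G) (lift 1 0 t) (lift 1 0 B)"
| pi: "hastype R G A (Srt s1) \<Longrightarrow> hastype R (A # G) B (Srt s2) \<Longrightarrow> prule s1 s2 \<Longrightarrow>
       hastype R G (Pi A B) (Srt s2)"
| app: "hastype R G f (Pi A B) \<Longrightarrow> hastype R G a A \<Longrightarrow> hastype R G (App f a) (subst B 0 a)"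
| lam: "hastype R (A # G) b B \<Longrightarrow> hastype R G (Pi A B) (Srt s) \<Longrightarrow> hastype R G (Lam A b) (Pi A B)"
| cnv: "hastype R G t A \<Longrightarrow> hastype R G B (Srt s) \<Longrightarrow> conv R A B \<Longrightarrow> hastype R G t B"

definition Arr :: "trm \<Rightarrow> trm \<Rightarrow> trm" where
  "Arr A B = Pi A (lift 1 0 B)"

definition Pow :: "trm \<Rightarrow> trm" where
  "Pow X = Arr X (Srt Star)"

definition TT :: "trm \<Rightarrow> trm" where
  "TT X = Pow (Pow X)"

definition Bot :: trm where
  "Bot = Pi (Srt Star) (Var 0)"

end

theory Submission
  imports Defs
begin

text \<open>Call \<open>p : Pow A\<close> inductive if \<open>match x p\<close> implies \<open>p x\<close> for all \<open>x\<close>, let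
  \<open>\<Omega> = intro (\<lambda>p. p inductive)\<close> and \<open>\<rho> = intro \<circ> match\<close>. The conversion hypothesis turns
  \<open>match (\<rho> x) p\<close> into \<open>match x (p \<circ> \<rho>)\<close> and \<open>match \<Omega> p\<close> into "\<open>p \<circ> \<rho>\<close> is inductive";
  hence every inductive \<open>p\<close> holds at \<open>\<Omega>\<close>: if \<open>h\<close> proves \<open>p\<close> inductive, then
  \<open>h \<Omega> (h \<circ> \<rho>)\<close> proves \<open>p \<Omega>\<close>.
  Let \<open>Q y\<close> say that \<open>match y p\<close> implies \<open>p (\<rho> y)\<close> for every \<open>p\<close>, and \<open>\<Delta> y = \<not> Q y\<close>.
  Then \<open>Q \<Omega>\<close> holds (apply the above to \<open>p \<circ> \<rho>\<close>), while \<open>\<Delta>\<close> is inductive because \<open>Q x\<close>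
  implies \<open>Q (\<rho> x)\<close>; so \<open>\<Delta> \<Omega>\<close>, a contradiction.\<close>

lemma lift_0 [simp]: "lift 0 c t = t"
  by (induction t arbitrary: c) auto

lemma lift_lift [simp]: "c \<le> k \<Longrightarrow> k \<le> c + n \<Longrightarrow> lift m k (lift n c t) = lift (m + n) c t"
  by (induction t arbitrary: c k) auto

lemma subst_lift [simp]:
  "0 < n \<Longrightarrow> c \<le> k \<Longrightarrow> k < c + n \<Longrightarrow> subst (lift n c t) k s = lift (n - 1) c t"
  by (induction t arbitrary: c k) auto

lemma lift_Bot [simp]: "lift n c Bot = Bot"
  by (simp add: Bot_def)

lemma subst_Bot [simp]: "subst Bot k s = Bot"
  by (simp add: Bot_def)

lemma conv_sym: "conv R a b \<Longrightarrow> conv R b a"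
  unfolding conv_def by (rule equivclp_sym)

lemma conv_trans: "conv R a b \<Longrightarrow> conv R b c \<Longrightarrow> conv R a c"
  unfolding conv_def by (rule equivclp_trans)

lemma conv_beta: "conv R (App (Lam X b) a) (subst b 0 a)"
  unfolding conv_def by (rule r_into_equivclp) (rule step.beta)

lemma conv_cong:
  assumes "conv R a b" and "\<And>x y. step R x y \<Longrightarrow> step R (f x) (f y)"
  shows "conv R (f a) (f b)"
  using assms(1) unfolding conv_def
proof (induction rule: equivclp_induct)
  case (step y z)
  then show ?case
    using assms(2) equivclp_into_equivclp by metis
qed simp

lemma conv_Pi: "conv R A A' \<Longrightarrow> conv R B B' \<Longrightarrow> conv R (Pi A B) (Pi A' B')"
  by (rule conv_trans[OF conv_cong[of R A A' "\<lambda>x. Pi x B"] conv_cong[of R B B' "Pi A'"]])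
    (auto intro: step.piL step.piR)

lemma hastype_app_eq:
  "hastype R \<Gamma> f (Pi X B) \<Longrightarrow> hastype R \<Gamma> a X \<Longrightarrow> T = subst B 0 a \<Longrightarrow> hastype R \<Gamma> (App f a) T"
  using hastype.app by blast

lemma hastype_var0_eq:
  "hastype R \<Gamma> X (Srt s) \<Longrightarrow> T = lift 1 0 X \<Longrightarrow> hastype R (X # \<Gamma>) (Var 0) T"
  using hastype.start by blast

lemma hastype_weak_eq:
  "hastype R \<Gamma> t T \<Longrightarrow> hastype R \<Gamma> X (Srt s) \<Longrightarrow> t' = lift 1 0 t \<Longrightarrow> T' = lift 1 0 T \<Longrightarrow>
    hastype R (X # \<Gamma>) t' T'"
  using hastype.weak by blast

lemma hastype_star_box: "hastype R \<Gamma> t T \<Longrightarrow> hastype R \<Gamma> (Srt Star) (Srt Box)"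
proof (induction rule: hastype.induct)
  case (ax s1 s2)
  then show ?case by (auto intro: hastype.ax axiom.intros)
next
  case (start \<Gamma> A s)
  then show ?case using hastype.weak[OF start.IH start.hyps] by simp
next
  case (weak \<Gamma> t B A s)
  then show ?case using hastype.weak[OF weak.IH(1) weak.hyps(2)] by simp
qed auto

inductive ctx_ext :: "(trm \<Rightarrow> trm \<Rightarrow> bool) \<Rightarrow> trm list \<Rightarrow> trm list \<Rightarrow> nat \<Rightarrow> bool" for R G where
  ctx_ext_base: "ctx_ext R G G 0"
| ctx_ext_cons: "ctx_ext R G \<Gamma> k \<Longrightarrow> hastype R \<Gamma> X (Srt s) \<Longrightarrow> ctx_ext R G (X # \<Gamma>) (Suc k)"

lemma ctx_ext_append: "ctx_ext R G \<Gamma> k \<Longrightarrow> \<exists>D. \<Gamma> = D @ G \<and> length D = k"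
  by (induction rule: ctx_ext.induct) auto

lemma ctx_ext_lift:
  "ctx_ext R G \<Gamma> k \<Longrightarrow> hastype R G t T \<Longrightarrow> hastype R \<Gamma> (lift k 0 t) (lift k 0 T)"
proof (induction rule: ctx_ext.induct)
  case (ctx_ext_cons \<Gamma> k X s)
  show ?case
    using hastype.weak[OF ctx_ext_cons.IH[OF ctx_ext_cons.prems] ctx_ext_cons.hyps(2)] by simp
qed simp


locale intro_match =
  fixes R :: "trm \<Rightarrow> trm \<Rightarrow> bool" and G :: "trm list" and A intro match :: trm
  assumes A_type: "hastype R G A (Srt Box)"
    and intro_type: "hastype R G intro (Arr (TT A) A)"
    and match_type: "hastype R G match (Arr A (TT A))"
    and match_intro: "\<And>D u p. hastype R (D @ G) u (lift (length D) 0 (TT A)) \<Longrightarrow>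
                 hastype R (D @ G) p (lift (length D) 0 (Pow A)) \<Longrightarrow>
      conv R
        (App (App (lift (length D) 0 match) (App (lift (length D) 0 intro) u)) p)
        (App u (Lam (lift (length D) 0 A)
           (App (lift 1 0 p)
              (App (lift (Suc (length D)) 0 intro)
                 (App (lift (Suc (length D)) 0 match) (Var 0))))))"
begin

text \<open>Everything below lives at depth \<open>k\<close>: in a context \<open>\<Gamma>\<close> extending \<open>G\<close> by \<open>k\<close>
  well-typed declarations, where the constants of \<open>G\<close> appear lifted by \<open>k\<close>.\<close>

abbreviation "Ak k \<equiv> lift k 0 A"
abbreviation "intro_at k \<equiv> lift k 0 intro"
abbreviation "match_at k \<equiv> lift k 0 match"
abbreviation "PowA k \<equiv> Pi (Ak k) (Srt Star)"
abbreviation "TA k \<equiv> Pi (PowA k) (Srt Star)"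
abbreviation "mem k x p \<equiv> App (App (match_at k) x) p"
abbreviation "rho k x \<equiv> App (intro_at k) (App (match_at k) x)"
abbreviation "pre k p \<equiv> Lam (Ak k) (App (lift 1 0 p) (rho (Suc k) (Var 0)))"
abbreviation "Ind k p \<equiv> Pi (Ak k) (Pi (mem (Suc k) (Var 0) (lift 1 0 p)) (App (lift 2 0 p) (Var 1)))"
abbreviation "IndPred k \<equiv> Lam (PowA k) (Ind (Suc k) (Var 0))"
abbreviation "Omega k \<equiv> App (intro_at k) (IndPred k)"
abbreviation "Q k y \<equiv>
  Pi (PowA k) (Pi (mem (Suc k) (lift 1 0 y) (Var 0)) (App (Var 1) (rho (Suc (Suc k)) (lift 2 0 y))))"
abbreviation "Delta k \<equiv> Lam (Ak k) (Pi (Q (Suc k) (Var 0)) Bot)"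

declare numeral_2_eq_2 [simp] \<comment> \<open>\<open>lift_lift\<close> computes \<open>lift (Suc (Suc 0))\<close>\<close>

abbreviation "extends \<Gamma> k \<equiv> ctx_ext R G \<Gamma> k"
abbreviation "ht \<Gamma> t T \<equiv> hastype R \<Gamma> t T"

lemma ty_A: "extends \<Gamma> k \<Longrightarrow> ht \<Gamma> (Ak k) (Srt Box)"
  using ctx_ext_lift[OF _ A_type] by simp

lemma ty_intro: "extends \<Gamma> k \<Longrightarrow> ht \<Gamma> (intro_at k) (Pi (TA k) (Ak (Suc k)))"
  using ctx_ext_lift[OF _ intro_type] by (simp add: Arr_def TT_def Pow_def)

lemma ty_match: "extends \<Gamma> k \<Longrightarrow> ht \<Gamma> (match_at k) (Pi (Ak k) (TA (Suc k)))"
  using ctx_ext_lift[OF _ match_type] by (simp add: Arr_def TT_def Pow_def)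

lemma ty_star: "extends \<Gamma> k \<Longrightarrow> ht \<Gamma> (Srt Star) (Srt Box)"
  using hastype_star_box ty_A by blast

lemma extends_A: "extends \<Gamma> k \<Longrightarrow> extends (Ak k # \<Gamma>) (Suc k)"
  using ctx_ext_cons ty_A by blast

lemma ty_PowA: "extends \<Gamma> k \<Longrightarrow> ht \<Gamma> (PowA k) (Srt Box)"
  by (rule hastype.pi[OF ty_A ty_star[OF extends_A] prule.intros(2)])

lemma extends_PowA: "extends \<Gamma> k \<Longrightarrow> extends (PowA k # \<Gamma>) (Suc k)"
  using ctx_ext_cons ty_PowA by blast

lemma ty_TA: "extends \<Gamma> k \<Longrightarrow> ht \<Gamma> (TA k) (Srt Box)"
  by (rule hastype.pi[OF ty_PowA ty_star[OF extends_PowA] prule.intros(2)])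

lemma ty_Bot: "extends \<Gamma> k \<Longrightarrow> ht \<Gamma> Bot (Srt Star)"
  unfolding Bot_def
  by (rule hastype.pi[OF ty_star hastype_var0_eq[OF ty_star] prule.intros(3)]) simp_all

lemma ty_match_app: "extends \<Gamma> k \<Longrightarrow> ht \<Gamma> x (Ak k) \<Longrightarrow> ht \<Gamma> (App (match_at k) x) (TA k)"
  by (rule hastype_app_eq[OF ty_match]) simp_all

lemma ty_rho: "extends \<Gamma> k \<Longrightarrow> ht \<Gamma> x (Ak k) \<Longrightarrow> ht \<Gamma> (rho k x) (Ak k)"
  by (rule hastype_app_eq[OF ty_intro ty_match_app]) simp_all

lemma ty_mem: "extends \<Gamma> k \<Longrightarrow> ht \<Gamma> x (Ak k) \<Longrightarrow> ht \<Gamma> p (PowA k) \<Longrightarrow> ht \<Gamma> (mem k x p) (Srt Star)"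
  by (rule hastype_app_eq[OF ty_match_app]) simp_all

lemma ty_pre:
  assumes w: "extends \<Gamma> k" and p: "ht \<Gamma> p (PowA k)"
  shows "ht \<Gamma> (pre k p) (PowA k)"
proof -
  have x: "ht (Ak k # \<Gamma>) (Var 0) (Ak (Suc k))"
    by (rule hastype_var0_eq[OF ty_A[OF w]]) simp
  have p': "ht (Ak k # \<Gamma>) (lift 1 0 p) (PowA (Suc k))"
    by (rule hastype_weak_eq[OF p ty_A[OF w]]) simp_all
  have "ht (Ak k # \<Gamma>) (App (lift 1 0 p) (rho (Suc k) (Var 0))) (Srt Star)"
    by (rule hastype_app_eq[OF p' ty_rho[OF extends_A[OF w] x]]) simp
  then show ?thesis
    by (rule hastype.lam[OF _ ty_PowA[OF w]])
qed

lemma ty_Ind_body: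
  assumes w: "extends \<Gamma> k" and p: "ht \<Gamma> p (PowA k)"
  shows "ht (Ak k # \<Gamma>) (Pi (mem (Suc k) (Var 0) (lift 1 0 p)) (App (lift 2 0 p) (Var 1))) (Srt Star)"
proof -
  let ?\<Gamma>' = "Ak k # \<Gamma>" and ?M = "mem (Suc k) (Var 0) (lift 1 0 p)"
  have x: "ht ?\<Gamma>' (Var 0) (Ak (Suc k))"
    by (rule hastype_var0_eq[OF ty_A[OF w]]) simp
  have p': "ht ?\<Gamma>' (lift 1 0 p) (PowA (Suc k))"
    by (rule hastype_weak_eq[OF p ty_A[OF w]]) simp_all
  have M: "ht ?\<Gamma>' ?M (Srt Star)"
    by (rule ty_mem[OF extends_A[OF w] x p'])
  have p'': "ht (?M # ?\<Gamma>') (lift 2 0 p) (PowA (Suc (Suc k)))"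
    by (rule hastype_weak_eq[OF p' M]) simp_all
  have x': "ht (?M # ?\<Gamma>') (Var 1) (Ak (Suc (Suc k)))"
    by (rule hastype_weak_eq[OF x M]) simp_all
  have "ht (?M # ?\<Gamma>') (App (lift 2 0 p) (Var 1)) (Srt Star)"
    by (rule hastype_app_eq[OF p'' x']) simp
  then show ?thesis
    by (rule hastype.pi[OF M _ prule.intros(1)])
qed

lemma ty_Ind: "extends \<Gamma> k \<Longrightarrow> ht \<Gamma> p (PowA k) \<Longrightarrow> ht \<Gamma> (Ind k p) (Srt Star)"
  by (rule hastype.pi[OF ty_A ty_Ind_body prule.intros(3)])

lemma ty_IndPred: "extends \<Gamma> k \<Longrightarrow> ht \<Gamma> (IndPred k) (TA k)"
  by (rule hastype.lam[OF ty_Ind[OF extends_PowA hastype_var0_eq[OF ty_PowA]] ty_TA]) simp_all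

lemma ty_Omega: "extends \<Gamma> k \<Longrightarrow> ht \<Gamma> (Omega k) (Ak k)"
  by (rule hastype_app_eq[OF ty_intro ty_IndPred]) simp_all

lemma ty_Q_body:
  assumes w: "extends \<Gamma> k" and y: "ht \<Gamma> y (Ak k)"
  shows "ht (PowA k # \<Gamma>)
    (Pi (mem (Suc k) (lift 1 0 y) (Var 0)) (App (Var 1) (rho (Suc (Suc k)) (lift 2 0 y)))) (Srt Star)"
proof -
  let ?\<Gamma>' = "PowA k # \<Gamma>" and ?M = "mem (Suc k) (lift 1 0 y) (Var 0)"
  have p: "ht ?\<Gamma>' (Var 0) (PowA (Suc k))"
    by (rule hastype_var0_eq[OF ty_PowA[OF w]]) simp
  have y': "ht ?\<Gamma>' (lift 1 0 y) (Ak (Suc k))"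
    by (rule hastype_weak_eq[OF y ty_PowA[OF w]]) simp_all
  have M: "ht ?\<Gamma>' ?M (Srt Star)"
    by (rule ty_mem[OF extends_PowA[OF w] y' p])
  have y'': "ht (?M # ?\<Gamma>') (lift 2 0 y) (Ak (Suc (Suc k)))"
    by (rule hastype_weak_eq[OF y' M]) simp_all
  have p': "ht (?M # ?\<Gamma>') (Var 1) (PowA (Suc (Suc k)))"
    by (rule hastype_weak_eq[OF p M]) simp_all
  have "ht (?M # ?\<Gamma>') (App (Var 1) (rho (Suc (Suc k)) (lift 2 0 y))) (Srt Star)"
    by (rule hastype_app_eq[OF p' ty_rho[OF ctx_ext_cons[OF extends_PowA[OF w] M] y'']]) simp
  then show ?thesis
    by (rule hastype.pi[OF M _ prule.intros(1)])
qed

lemma ty_Q: "extends \<Gamma> k \<Longrightarrow> ht \<Gamma> y (Ak k) \<Longrightarrow> ht \<Gamma> (Q k y) (Srt Star)"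
  by (rule hastype.pi[OF ty_PowA ty_Q_body prule.intros(3)])

lemma ty_Delta_body:
  assumes w: "extends \<Gamma> k"
  shows "ht (Ak k # \<Gamma>) (Pi (Q (Suc k) (Var 0)) Bot) (Srt Star)"
proof -
  have Q: "ht (Ak k # \<Gamma>) (Q (Suc k) (Var 0)) (Srt Star)"
    by (rule ty_Q[OF extends_A[OF w] hastype_var0_eq[OF ty_A[OF w]]]) simp
  show ?thesis
    by (rule hastype.pi[OF Q ty_Bot[OF ctx_ext_cons[OF extends_A[OF w] Q]] prule.intros(1)])
qed

lemma ty_Delta: "extends \<Gamma> k \<Longrightarrow> ht \<Gamma> (Delta k) (PowA k)"
  by (rule hastype.lam[OF ty_Delta_body ty_PowA])

lemma conv_pre_app: "conv R (App (pre k p) y) (App p (rho k y))"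
  using conv_beta[of R "Ak k" "App (lift 1 0 p) (rho (Suc k) (Var 0))" y] by simp

lemma conv_IndPred_app: "conv R (App (IndPred k) p) (Ind k p)"
  using conv_beta[of R "PowA k" "Ind (Suc k) (Var 0)" p] by simp

lemma conv_Delta_app: "conv R (App (Delta k) y) (Pi (Q k y) Bot)"
  using conv_beta[of R "Ak k" "Pi (Q (Suc k) (Var 0)) Bot" y] by simp

lemma conv_match_intro:
  assumes "extends \<Gamma> k" and "ht \<Gamma> u (TA k)" and "ht \<Gamma> p (PowA k)"
  shows "conv R (mem k (App (intro_at k) u) p) (App u (pre k p))"
proof -
  obtain D where "\<Gamma> = D @ G" and "length D = k"
    using ctx_ext_append[OF assms(1)] by blast
  then show ?thesis
    using match_intro[of D u p] assms(2,3) by (simp add: TT_def Pow_def Arr_def)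
qed

lemma conv_mem_rho:
  "extends \<Gamma> k \<Longrightarrow> ht \<Gamma> x (Ak k) \<Longrightarrow> ht \<Gamma> p (PowA k) \<Longrightarrow> conv R (mem k (rho k x) p) (mem k x (pre k p))"
  by (rule conv_match_intro[OF _ ty_match_app])

lemma conv_mem_Omega:
  "extends \<Gamma> k \<Longrightarrow> ht \<Gamma> p (PowA k) \<Longrightarrow> conv R (mem k (Omega k) p) (Ind k (pre k p))"
  by (rule conv_trans[OF conv_match_intro[OF _ ty_IndPred] conv_IndPred_app])

abbreviation "Omega_proof k h \<equiv> App (App h (Omega k)) (pre k h)"

lemma ty_Omega_proof:
  assumes w: "extends \<Gamma> k" and p: "ht \<Gamma> p (PowA k)" and h: "ht \<Gamma> h (Ind k p)"
  shows "ht \<Gamma> (Omega_proof k h) (App p (Omega k))"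
proof -
  let ?\<Gamma>' = "Ak k # \<Gamma>"
  have w': "extends ?\<Gamma>' (Suc k)"
    by (rule extends_A[OF w])
  have x: "ht ?\<Gamma>' (Var 0) (Ak (Suc k))"
    by (rule hastype_var0_eq[OF ty_A[OF w]]) simp
  have p': "ht ?\<Gamma>' (lift 1 0 p) (PowA (Suc k))"
    by (rule hastype_weak_eq[OF p ty_A[OF w]]) simp_all
  have h': "ht ?\<Gamma>' (lift 1 0 h) (Ind (Suc k) (lift 1 0 p))"
    by (rule hastype_weak_eq[OF h ty_A[OF w]]) simp_all
  have "ht ?\<Gamma>' (App (lift 1 0 h) (rho (Suc k) (Var 0)))
      (Pi (mem (Suc k) (rho (Suc k) (Var 0)) (lift 1 0 p)) (App (lift 2 0 p) (rho (Suc (Suc k)) (Var 1))))"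
    by (rule hastype_app_eq[OF h' ty_rho[OF w' x]]) simp
  moreover have "conv R
      (Pi (mem (Suc k) (rho (Suc k) (Var 0)) (lift 1 0 p)) (App (lift 2 0 p) (rho (Suc (Suc k)) (Var 1))))
      (Pi (mem (Suc k) (Var 0) (lift 1 0 (pre k p))) (App (lift 2 0 (pre k p)) (Var 1)))"
    using conv_Pi[OF conv_mem_rho[OF w' x p'] conv_sym[OF conv_pre_app[of "Suc (Suc k)" "lift 2 0 p" "Var 1"]]]
    by simp
  ultimately have "ht ?\<Gamma>' (App (lift 1 0 h) (rho (Suc k) (Var 0)))
      (Pi (mem (Suc k) (Var 0) (lift 1 0 (pre k p))) (App (lift 2 0 (pre k p)) (Var 1)))"
    using hastype.cnv ty_Ind_body[OF w ty_pre[OF w p]] by blast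
  then have "ht \<Gamma> (pre k h) (Ind k (pre k p))"
    by (rule hastype.lam[OF _ ty_Ind[OF w ty_pre[OF w p]]])
  then have arg: "ht \<Gamma> (pre k h) (mem k (Omega k) p)"
    by (rule hastype.cnv[OF _ ty_mem[OF w ty_Omega[OF w] p] conv_sym[OF conv_mem_Omega[OF w p]]])
  have "ht \<Gamma> (App h (Omega k)) (Pi (mem k (Omega k) p) (App (lift 1 0 p) (Omega (Suc k))))"
    by (rule hastype_app_eq[OF h ty_Omega[OF w]]) simp
  then show ?thesis
    by (rule hastype_app_eq[OF _ arg]) simp
qed

abbreviation "Q_rho_proof k q \<equiv> Lam (PowA k) (App (lift 1 0 q) (pre (Suc k) (Var 0)))"

lemma ty_Q_rho_proof:
  assumes w: "extends \<Gamma> k" and x: "ht \<Gamma> x (Ak k)" and q: "ht \<Gamma> q (Q k x)"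
  shows "ht \<Gamma> (Q_rho_proof k q) (Q k (rho k x))"
proof -
  let ?\<Gamma>' = "PowA k # \<Gamma>"
  have w': "extends ?\<Gamma>' (Suc k)"
    by (rule extends_PowA[OF w])
  have p: "ht ?\<Gamma>' (Var 0) (PowA (Suc k))"
    by (rule hastype_var0_eq[OF ty_PowA[OF w]]) simp
  have x': "ht ?\<Gamma>' (lift 1 0 x) (Ak (Suc k))"
    by (rule hastype_weak_eq[OF x ty_PowA[OF w]]) simp_all
  have q': "ht ?\<Gamma>' (lift 1 0 q) (Q (Suc k) (lift 1 0 x))"
    by (rule hastype_weak_eq[OF q ty_PowA[OF w]]) simp_all
  have "ht ?\<Gamma>' (App (lift 1 0 q) (pre (Suc k) (Var 0)))
      (Pi (mem (Suc k) (lift 1 0 x) (pre (Suc k) (Var 0)))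
        (App (pre (Suc (Suc k)) (Var 1)) (rho (Suc (Suc k)) (lift 2 0 x))))"
    by (rule hastype_app_eq[OF q' ty_pre[OF w' p]]) simp
  moreover have "conv R
      (Pi (mem (Suc k) (lift 1 0 x) (pre (Suc k) (Var 0)))
        (App (pre (Suc (Suc k)) (Var 1)) (rho (Suc (Suc k)) (lift 2 0 x))))
      (Pi (mem (Suc k) (lift 1 0 (rho k x)) (Var 0)) (App (Var 1) (rho (Suc (Suc k)) (lift 2 0 (rho k x)))))"
    using conv_Pi[OF conv_sym[OF conv_mem_rho[OF w' x' p]]
        conv_pre_app[of "Suc (Suc k)" "Var 1" "rho (Suc (Suc k)) (lift 2 0 x)"]] by simp
  ultimately have "ht ?\<Gamma>' (App (lift 1 0 q) (pre (Suc k) (Var 0)))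
      (Pi (mem (Suc k) (lift 1 0 (rho k x)) (Var 0)) (App (Var 1) (rho (Suc (Suc k)) (lift 2 0 (rho k x)))))"
    using hastype.cnv ty_Q_body[OF w ty_rho[OF w x]] by blast
  then show ?thesis
    by (rule hastype.lam[OF _ ty_Q[OF w ty_rho[OF w x]]])
qed

lemma ty_Delta_ind_step:
  assumes w: "extends \<Gamma> k" and x: "ht \<Gamma> x (Ak k)"
    and h: "ht \<Gamma> h (mem k x (Delta k))" and q: "ht \<Gamma> q (Q k x)"
  shows "ht \<Gamma> (App (App (App q (Delta k)) h) (Q_rho_proof k q)) Bot"
proof -
  have Q: "ht \<Gamma> (Q k (rho k x)) (Srt Star)"
    by (rule ty_Q[OF w ty_rho[OF w x]])
  have "ht \<Gamma> (App q (Delta k)) (Pi (mem k x (Delta k)) (App (Delta (Suc k)) (rho (Suc k) (lift 1 0 x))))"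
    by (rule hastype_app_eq[OF q ty_Delta[OF w]]) simp
  then have "ht \<Gamma> (App (App q (Delta k)) h) (App (Delta k) (rho k x))"
    by (rule hastype_app_eq[OF _ h]) simp
  then have "ht \<Gamma> (App (App q (Delta k)) h) (Pi (Q k (rho k x)) Bot)"
    by (rule hastype.cnv[OF _ hastype.pi[OF Q ty_Bot[OF ctx_ext_cons[OF w Q]] prule.intros(1)]
          conv_Delta_app])
  then show ?thesis
    by (rule hastype_app_eq[OF _ ty_Q_rho_proof[OF w x q]]) simp
qed

abbreviation "Delta_ind_proof k \<equiv>
  Lam (Ak k) (Lam (mem (Suc k) (Var 0) (Delta (Suc k))) (Lam (Q (Suc (Suc k)) (Var 1))
    (App (App (App (Var 0) (Delta (Suc (Suc (Suc k))))) (Var 1)) (Q_rho_proof (Suc (Suc (Suc k))) (Var 0)))))"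

lemma ty_Delta_ind_proof:
  assumes w: "extends \<Gamma> k"
  shows "ht \<Gamma> (Delta_ind_proof k) (Ind k (Delta k))"
proof -
  let ?\<Gamma>\<^sub>1 = "Ak k # \<Gamma>"
  let ?M = "mem (Suc k) (Var 0) (Delta (Suc k))"
  let ?\<Gamma>\<^sub>2 = "?M # ?\<Gamma>\<^sub>1"
  let ?Q = "Q (Suc (Suc k)) (Var 1)"
  let ?\<Gamma>\<^sub>3 = "?Q # ?\<Gamma>\<^sub>2"
  have w\<^sub>1: "extends ?\<Gamma>\<^sub>1 (Suc k)"
    by (rule extends_A[OF w])
  have x\<^sub>1: "ht ?\<Gamma>\<^sub>1 (Var 0) (Ak (Suc k))"
    by (rule hastype_var0_eq[OF ty_A[OF w]]) simp
  have M: "ht ?\<Gamma>\<^sub>1 ?M (Srt Star)"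
    by (rule ty_mem[OF w\<^sub>1 x\<^sub>1 ty_Delta[OF w\<^sub>1]])
  have w\<^sub>2: "extends ?\<Gamma>\<^sub>2 (Suc (Suc k))"
    by (rule ctx_ext_cons[OF w\<^sub>1 M])
  have x\<^sub>2: "ht ?\<Gamma>\<^sub>2 (Var 1) (Ak (Suc (Suc k)))"
    by (rule hastype_weak_eq[OF x\<^sub>1 M]) simp_all
  have Q: "ht ?\<Gamma>\<^sub>2 ?Q (Srt Star)"
    by (rule ty_Q[OF w\<^sub>2 x\<^sub>2])
  have w\<^sub>3: "extends ?\<Gamma>\<^sub>3 (Suc (Suc (Suc k)))"
    by (rule ctx_ext_cons[OF w\<^sub>2 Q])
  have x\<^sub>3: "ht ?\<Gamma>\<^sub>3 (Var 2) (Ak (Suc (Suc (Suc k))))"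
    by (rule hastype_weak_eq[OF x\<^sub>2 Q]) simp_all
  have h\<^sub>2: "ht ?\<Gamma>\<^sub>2 (Var 0) (mem (Suc (Suc k)) (Var 1) (Delta (Suc (Suc k))))"
    by (rule hastype_var0_eq[OF M]) simp
  have h\<^sub>3: "ht ?\<Gamma>\<^sub>3 (Var 1) (mem (Suc (Suc (Suc k))) (Var 2) (Delta (Suc (Suc (Suc k)))))"
    by (rule hastype_weak_eq[OF h\<^sub>2 Q]) simp_all
  have q\<^sub>3: "ht ?\<Gamma>\<^sub>3 (Var 0) (Q (Suc (Suc (Suc k))) (Var 2))"
    by (rule hastype_var0_eq[OF Q]) simp
  let ?b = "App (App (App (Var 0) (Delta (Suc (Suc (Suc k))))) (Var 1)) (Q_rho_proof (Suc (Suc (Suc k))) (Var 0))"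
  have "ht ?\<Gamma>\<^sub>3 ?b Bot"
    by (rule ty_Delta_ind_step[OF w\<^sub>3 x\<^sub>3 h\<^sub>3 q\<^sub>3])
  then have "ht ?\<Gamma>\<^sub>2 (Lam ?Q ?b) (Pi ?Q Bot)"
    by (rule hastype.lam[OF _ hastype.pi[OF Q ty_Bot[OF ctx_ext_cons[OF w\<^sub>2 Q]] prule.intros(1)]])
  then have "ht ?\<Gamma>\<^sub>2 (Lam ?Q ?b) (App (Delta (Suc (Suc k))) (Var 1))"
    by (rule hastype.cnv[OF _ hastype_app_eq[OF ty_Delta[OF w\<^sub>2] x\<^sub>2] conv_sym[OF conv_Delta_app]]) simp
  then have "ht ?\<Gamma>\<^sub>1 (Lam ?M (Lam ?Q ?b)) (Pi ?M (App (Delta (Suc (Suc k))) (Var 1)))"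
    by (rule hastype.lam[OF _ hastype.pi[OF M _ prule.intros(1)]])
      (rule hastype_app_eq[OF ty_Delta[OF w\<^sub>2] x\<^sub>2], simp)
  moreover have "ht \<Gamma> (Pi (Ak k) (Pi ?M (App (Delta (Suc (Suc k))) (Var 1)))) (Srt Star)"
    using ty_Ind[OF w ty_Delta[OF w]] by simp
  ultimately show ?thesis
    using hastype.lam by simp
qed

abbreviation "Q_Omega_proof k \<equiv>
  Lam (PowA k) (Lam (mem (Suc k) (Omega (Suc k)) (Var 0)) (Omega_proof (Suc (Suc k)) (Var 0)))"

lemma ty_Q_Omega_proof:
  assumes w: "extends \<Gamma> k"
  shows "ht \<Gamma> (Q_Omega_proof k) (Q k (Omega k))"
proof -
  let ?\<Gamma>\<^sub>1 = "PowA k # \<Gamma>"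
  let ?M = "mem (Suc k) (Omega (Suc k)) (Var 0)"
  let ?\<Gamma>\<^sub>2 = "?M # ?\<Gamma>\<^sub>1"
  have w\<^sub>1: "extends ?\<Gamma>\<^sub>1 (Suc k)"
    by (rule extends_PowA[OF w])
  have p\<^sub>1: "ht ?\<Gamma>\<^sub>1 (Var 0) (PowA (Suc k))"
    by (rule hastype_var0_eq[OF ty_PowA[OF w]]) simp
  have M: "ht ?\<Gamma>\<^sub>1 ?M (Srt Star)"
    by (rule ty_mem[OF w\<^sub>1 ty_Omega[OF w\<^sub>1] p\<^sub>1])
  have w\<^sub>2: "extends ?\<Gamma>\<^sub>2 (Suc (Suc k))"
    by (rule ctx_ext_cons[OF w\<^sub>1 M])
  have p\<^sub>2: "ht ?\<Gamma>\<^sub>2 (Var 1) (PowA (Suc (Suc k)))"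
    by (rule hastype_weak_eq[OF p\<^sub>1 M]) simp_all
  have "ht ?\<Gamma>\<^sub>2 (Var 0) (mem (Suc (Suc k)) (Omega (Suc (Suc k))) (Var 1))"
    by (rule hastype_var0_eq[OF M]) simp
  then have "ht ?\<Gamma>\<^sub>2 (Var 0) (Ind (Suc (Suc k)) (pre (Suc (Suc k)) (Var 1)))"
    by (rule hastype.cnv[OF _ ty_Ind[OF w\<^sub>2 ty_pre[OF w\<^sub>2 p\<^sub>2]] conv_mem_Omega[OF w\<^sub>2 p\<^sub>2]])
  then have "ht ?\<Gamma>\<^sub>2 (Omega_proof (Suc (Suc k)) (Var 0)) (App (pre (Suc (Suc k)) (Var 1)) (Omega (Suc (Suc k))))"
    by (rule ty_Omega_proof[OF w\<^sub>2 ty_pre[OF w\<^sub>2 p\<^sub>2]])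
  then have "ht ?\<Gamma>\<^sub>2 (Omega_proof (Suc (Suc k)) (Var 0)) (App (Var 1) (rho (Suc (Suc k)) (Omega (Suc (Suc k)))))"
    by (rule hastype.cnv[OF _ hastype_app_eq[OF p\<^sub>2 ty_rho[OF w\<^sub>2 ty_Omega[OF w\<^sub>2]]] conv_pre_app]) simp
  moreover have "ht ?\<Gamma>\<^sub>1 (Pi ?M (App (Var 1) (rho (Suc (Suc k)) (Omega (Suc (Suc k)))))) (Srt Star)"
    using ty_Q_body[OF w ty_Omega[OF w]] by simp
  ultimately have "ht ?\<Gamma>\<^sub>1 (Lam ?M (Omega_proof (Suc (Suc k)) (Var 0)))
      (Pi ?M (App (Var 1) (rho (Suc (Suc k)) (Omega (Suc (Suc k))))))"
    by (rule hastype.lam)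
  moreover have "ht \<Gamma> (Pi (PowA k) (Pi ?M (App (Var 1) (rho (Suc (Suc k)) (Omega (Suc (Suc k))))))) (Srt Star)"
    using ty_Q[OF w ty_Omega[OF w]] by simp
  ultimately show ?thesis
    using hastype.lam by simp
qed

lemma Bot_inhabited:
  assumes w: "extends \<Gamma> k"
  shows "ht \<Gamma> (App (Omega_proof k (Delta_ind_proof k)) (Q_Omega_proof k)) Bot"
proof -
  have Q: "ht \<Gamma> (Q k (Omega k)) (Srt Star)"
    by (rule ty_Q[OF w ty_Omega[OF w]])
  have "ht \<Gamma> (Omega_proof k (Delta_ind_proof k)) (App (Delta k) (Omega k))"
    by (rule ty_Omega_proof[OF w ty_Delta[OF w] ty_Delta_ind_proof[OF w]])
  then have "ht \<Gamma> (Omega_proof k (Delta_ind_proof k)) (Pi (Q k (Omega k)) Bot)"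
    by (rule hastype.cnv[OF _ hastype.pi[OF Q ty_Bot[OF ctx_ext_cons[OF w Q]] prule.intros(1)]
          conv_Delta_app])
  then show ?thesis
    by (rule hastype_app_eq[OF _ ty_Q_Omega_proof[OF w]]) simp
qed

end

theorem theorem2:
  fixes R :: "trm \<Rightarrow> trm \<Rightarrow> bool" and G :: "trm list" and A intro match :: trm
  assumes "hastype R G A (Srt Box)"
    and "hastype R G intro (Arr (TT A) A)"
    and "hastype R G match (Arr A (TT A))"
    and "\<And>D u p. hastype R (D @ G) u (lift (length D) 0 (TT A)) \<Longrightarrow>
                 hastype R (D @ G) p (lift (length D) 0 (Pow A)) \<Longrightarrow>
      conv R
        (App (App (lift (length D) 0 match) (App (lift (length D) 0 intro) u)) p)
        (App u (Lam (lift (length D) 0 A)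
           (App (lift 1 0 p)
              (App (lift (Suc (length D)) 0 intro)
                 (App (lift (Suc (length D)) 0 match) (Var 0))))))"
  shows "\<exists>t. hastype R G t Bot"
proof -
  interpret intro_match R G A intro match
    by (rule intro_match.intro) (fact assms)+
  show ?thesis
    using Bot_inhabited[OF ctx_ext_base] by auto
qed

end
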